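(* Let $B_k$ ($k\ge2$) be a generalized Bethe tree with parameters $n_1,\dots,n_k$, $d_1,\dots,d_k$, $m_1,\dots,m_{k-1}$ as in the context, let $\alpha\in[0,1]$ and $\beta=1-\alpha$. Define polynomials $P_0(\lambda)=1$, $P_1(\lambda)=\lambda-\alpha$, and \[ P_j(\lambda)=(\lambda-\alpha d_j)P_{j-1}(\lambda)-\beta^2m_{j-1}P_{j-2}(\lambda)\quad (j=2,\dots,k). \] Then the characteristic polynomial $\phi(\lambda)=\det(\lambda I-A_\alpha(B_k))$ satisfies \[ \phi(\lambda)=P_k(\lambda)\prod_{j=1}^{k-1}P_j(\lambda)^{n_j-n_{j+1}}. \]
   Context: For a graph $G$, $A(G)$ is the adjacency matrix, $D(G)$ the diagonal degree matrix, and $A_\alpha(G)=\alpha D(G)+(1-\alpha)A(G)$. In a rooted tree, the level of a vertex is its distance to the root plus one. A generalized Bethe tree $B_k$ is a rooted tree with $k$ levels in which all vertices at the same level have the same degree. For $j\in\{1,\dots,k\}$, $n_{k-j+1}$ denotes the number of vertices at level $j$ and $d_{k-j+1}$ their common degree (so index $1$ refers to the deepest level and index $k$ to the root; $d_1=1$, $n_k=1$). For $j\in\{1,\dots,k-1\}$, $m_j=n_j/n_{j+1}$ (a positive integer); one has $n_j=(d_{j+1}-1)n_{j+1}$ for $j\le k-2$ and $n_{k-1}=d_k=m_{k-1}$. *)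

theory Defs
  imports Main "Jordan_Normal_Form.Char_Poly"
begin

definition simple_graph :: "nat \<Rightarrow> (nat \<Rightarrow> nat \<Rightarrow> bool) \<Rightarrow> bool" where
  "simple_graph N E \<longleftrightarrow> (\<forall>u v. E u v \<longrightarrow> u < N \<and> v < N) \<and>
     (\<forall>u v. E u v \<longrightarrow> E v u) \<and> (\<forall>u. \<not> E u u)"

definition is_walk :: "nat \<Rightarrow> (nat \<Rightarrow> nat \<Rightarrow> bool) \<Rightarrow> nat list \<Rightarrow> bool" where
  "is_walk N E p \<longleftrightarrow> p \<noteq> [] \<and> (\<forall>v\<in>set p. v < N) \<and>
     (\<forall>i. Suc i < length p \<longrightarrow> E (p ! i) (p ! Suc i))"

definition connected_graph :: "nat \<Rightarrow> (nat \<Rightarrow> nat \<Rightarrow> bool) \<Rightarrow> bool" where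
  "connected_graph N E \<longleftrightarrow>
     (\<forall>u<N. \<forall>v<N. \<exists>p. is_walk N E p \<and> hd p = u \<and> last p = v)"

definition is_cycle :: "nat \<Rightarrow> (nat \<Rightarrow> nat \<Rightarrow> bool) \<Rightarrow> nat list \<Rightarrow> bool" where
  "is_cycle N E p \<longleftrightarrow> is_walk N E p \<and> length p \<ge> 3 \<and> distinct p \<and> E (last p) (hd p)"

definition is_tree :: "nat \<Rightarrow> (nat \<Rightarrow> nat \<Rightarrow> bool) \<Rightarrow> bool" where
  "is_tree N E \<longleftrightarrow> N \<ge> 1 \<and> simple_graph N E \<and> connected_graph N E \<and>
     (\<nexists>p. is_cycle N E p)"

definition gdist :: "nat \<Rightarrow> (nat \<Rightarrow> nat \<Rightarrow> bool) \<Rightarrow> nat \<Rightarrow> nat \<Rightarrow> nat" where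
  "gdist N E u v = (LEAST n. \<exists>p. is_walk N E p \<and> hd p = u \<and> last p = v \<and> length p = Suc n)"

definition level :: "nat \<Rightarrow> (nat \<Rightarrow> nat \<Rightarrow> bool) \<Rightarrow> nat \<Rightarrow> nat \<Rightarrow> nat" where
  "level N E r v = gdist N E r v + 1"

definition gdegree :: "nat \<Rightarrow> (nat \<Rightarrow> nat \<Rightarrow> bool) \<Rightarrow> nat \<Rightarrow> nat" where
  "gdegree N E v = card {u. u < N \<and> E v u}"

definition gen_bethe_tree :: "nat \<Rightarrow> (nat \<Rightarrow> nat \<Rightarrow> bool) \<Rightarrow> nat \<Rightarrow> nat \<Rightarrow> bool" where
  "gen_bethe_tree N E r k \<longleftrightarrow> is_tree N E \<and> r < N \<and>
     (\<forall>v<N. level N E r v \<le> k) \<and> (\<exists>v<N. level N E r v = k) \<and>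
     (\<forall>u<N. \<forall>v<N. level N E r u = level N E r v \<longrightarrow> gdegree N E u = gdegree N E v)"

definition adj_matrix :: "nat \<Rightarrow> (nat \<Rightarrow> nat \<Rightarrow> bool) \<Rightarrow> real mat" where
  "adj_matrix N E = mat N N (\<lambda>(i, j). if E i j then 1 else 0)"

definition deg_matrix :: "nat \<Rightarrow> (nat \<Rightarrow> nat \<Rightarrow> bool) \<Rightarrow> real mat" where
  "deg_matrix N E = mat N N (\<lambda>(i, j). if i = j then real (gdegree N E i) else 0)"

definition A_alpha :: "real \<Rightarrow> nat \<Rightarrow> (nat \<Rightarrow> nat \<Rightarrow> bool) \<Rightarrow> real mat" where
  "A_alpha \<alpha> N E = \<alpha> \<cdot>\<^sub>m deg_matrix N E + (1 - \<alpha>) \<cdot>\<^sub>m adj_matrix N E"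

text \<open>The polynomials P_j; d and m are the level parameters (index 1 = deepest level).\<close>
fun Pb :: "real \<Rightarrow> (nat \<Rightarrow> real) \<Rightarrow> (nat \<Rightarrow> real) \<Rightarrow> nat \<Rightarrow> real poly" where
  "Pb \<alpha> d m 0 = 1"
| "Pb \<alpha> d m (Suc 0) = [:- \<alpha>, 1:]"
| "Pb \<alpha> d m (Suc (Suc j)) =
     [:- (\<alpha> * d (Suc (Suc j))), 1:] * Pb \<alpha> d m (Suc j)
     - Polynomial.smult ((1 - \<alpha>)^2 * m (Suc j)) (Pb \<alpha> d m j)"

end

theory Submission
  imports Defs
begin

text \<open>
  Orient the tree towards the root. Since every edge joins a vertex to its parent, the matrix
  z I - A_alpha(B_k) is supported on the parent relation and factors as L D L^T, with L unit
  triangular with respect to depth and D diagonal. Eliminating the leaves upwards, the pivot at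
  a vertex of level j (counted from the bottom) is P_j(z) / P_(j-1)(z): a vertex of level j has
  m_(j-1) children, each contributing (1 - alpha)^2 divided by the pivot below, which is exactly
  the three-term recurrence. The product of the pivots over the n_j vertices of each level
  telescopes to the claimed formula wherever no P_j with j < k vanishes, and two polynomials
  agreeing off the finitely many roots are equal.
\<close>

lemma is_walk_iff_successively:
  "is_walk N E p \<longleftrightarrow> p \<noteq> [] \<and> set p \<subseteq> {..<N} \<and> successively E p"
  by (auto simp: is_walk_def successively_conv_nth)

lemma is_walk_join:
  assumes "is_walk N E (xs @ [v])" "is_walk N E (v # ys)"
  shows "is_walk N E (xs @ v # ys)"
  using assms by (auto simp: is_walk_iff_successively successively_append_iff)

locale rooted_tree =
  fixes N :: nat and E :: "nat \<Rightarrow> nat \<Rightarrow> bool" and r :: nat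
  assumes tree: "is_tree N E" and root: "r < N"
begin

lemma edge_bounded: "E u v \<Longrightarrow> u < N \<and> v < N"
  and edge_sym: "E u v \<Longrightarrow> E v u"
  and edge_irrefl: "\<not> E u u"
  using tree by (auto simp: is_tree_def simple_graph_def)

lemma no_cycle: "\<not> is_cycle N E p"
  using tree by (simp add: is_tree_def)

lemma is_walk_rev: "is_walk N E (rev p) \<longleftrightarrow> is_walk N E p"
proof -
  have sym: "(\<lambda>x y. E y x) = E" using edge_sym by (auto intro!: ext)
  show ?thesis unfolding is_walk_iff_successively successively_rev sym by simp
qed

definition depth :: "nat \<Rightarrow> nat" where
  "depth v = gdist N E r v"

lemma shortest_walk:
  assumes "v < N"
  obtains p where "is_walk N E p" "hd p = r" "last p = v" "length p = Suc (depth v)"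
proof -
  have "connected_graph N E" using tree by (simp add: is_tree_def)
  then obtain p where p: "is_walk N E p" "hd p = r" "last p = v"
    using assms root unfolding connected_graph_def by blast
  then have "length p = Suc (length p - 1)" by (cases p) (auto simp: is_walk_def)
  with p have "\<exists>n p. is_walk N E p \<and> hd p = r \<and> last p = v \<and> length p = Suc n" by blast
  then have "\<exists>p. is_walk N E p \<and> hd p = r \<and> last p = v \<and> length p = Suc (depth v)"
    unfolding depth_def gdist_def by (rule LeastI_ex)
  then show thesis using that by blast
qed

lemma depth_le_walk:
  "is_walk N E p \<Longrightarrow> hd p = r \<Longrightarrow> last p = v \<Longrightarrow> length p = Suc n \<Longrightarrow> depth v \<le> n"
  unfolding depth_def gdist_def by (rule Least_le) blast

lemma depth_root [simp]: "depth r = 0"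
  using depth_le_walk[of "[r]" r 0] root by (simp add: is_walk_def)

lemma depth_edge:
  assumes "E u v"
  shows "depth v \<le> depth u + 1"
proof -
  obtain p where p: "is_walk N E p" "hd p = r" "last p = u" "length p = Suc (depth u)"
    using shortest_walk edge_bounded assms by blast
  then have "is_walk N E (p @ [v])" "hd (p @ [v]) = r"
    using assms edge_bounded by (auto simp: is_walk_iff_successively successively_append_iff)
  then show ?thesis using depth_le_walk[of "p @ [v]" v "depth u + 1"] p by simp
qed

lemma exists_parent:
  assumes v: "v < N" "v \<noteq> r"
  shows "\<exists>w. E w v \<and> depth w + 1 = depth v"
proof -
  obtain p where p: "is_walk N E p" "hd p = r" "last p = v" "length p = Suc (depth v)"
    using shortest_walk v by blast
  define q where "q = butlast p"
  have p_eq: "p = q @ [v]" using p(1,3) unfolding q_def is_walk_def by (metis append_butlast_last_id)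
  with p(2) v(2) have "q \<noteq> []" by auto
  with p p_eq have q: "is_walk N E q" "E (last q) v" "hd q = r" "length q = depth v"
    by (auto simp: is_walk_iff_successively successively_append_iff)
  have "depth v > 0" using q(4) \<open>q \<noteq> []\<close> by (metis length_greater_0_conv)
  with q have "depth (last q) + 1 \<le> depth v" using depth_le_walk[OF q(1,3) refl, of "depth v - 1"] by simp
  with depth_edge[OF q(2)] q(2) show ?thesis by (intro exI[of _ "last q"]) simp
qed

definition parent :: "nat \<Rightarrow> nat" where
  "parent v = (SOME w. E w v \<and> depth w + 1 = depth v)"

lemma parent:
  assumes "v < N" "v \<noteq> r"
  shows "E (parent v) v" "depth (parent v) + 1 = depth v" "parent v < N"
proof -
  have "E (parent v) v \<and> depth (parent v) + 1 = depth v"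
    unfolding parent_def using exists_parent[OF assms] by (rule someI_ex)
  then show "E (parent v) v" "depth (parent v) + 1 = depth v" "parent v < N"
    using edge_bounded by auto
qed

lemma depth_eq_0_iff: "v < N \<Longrightarrow> depth v = 0 \<longleftrightarrow> v = r"
  using parent(2) by fastforce

definition ancestor :: "nat \<Rightarrow> nat \<Rightarrow> nat" where
  "ancestor s v = (parent ^^ s) v"

lemma ancestor_0 [simp]: "ancestor 0 v = v"
  and ancestor_Suc [simp]: "ancestor (Suc s) v = parent (ancestor s v)"
  by (simp_all add: ancestor_def)

lemma ancestor:
  assumes "v < N" "s \<le> depth v"
  shows "ancestor s v < N \<and> depth (ancestor s v) = depth v - s"
  using assms(2)
proof (induction s)
  case (Suc s)
  then have "ancestor s v < N" "depth (ancestor s v) = depth v - s" "ancestor s v \<noteq> r" by auto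
  then show ?case using parent[of "ancestor s v"] Suc.prems by simp
qed (use assms in simp)

lemma ancestor_edge:
  assumes "v < N" "s < depth v"
  shows "E (ancestor (Suc s) v) (ancestor s v)"
proof -
  have "ancestor s v < N" "ancestor s v \<noteq> r" using ancestor[of v s] assms by auto
  then show ?thesis using parent(1) by simp
qed

lemma ancestor_depth: "v < N \<Longrightarrow> ancestor (depth v) v = r"
  using ancestor[of v "depth v"] depth_eq_0_iff by force

lemma is_walk_ancestor_path:
  assumes "v < N" "s \<le> depth v"
  shows "is_walk N E (map (\<lambda>i. ancestor i v) [0..<Suc s])"
  using assms ancestor[of v] ancestor_edge[of v] edge_sym
  by (auto simp: is_walk_iff_successively successively_conv_nth simp del: upt_Suc)

lemma distinct_ancestor_path:
  assumes "v < N" "s \<le> depth v"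
  shows "distinct (map (\<lambda>i. ancestor i v) [0..<Suc s])"
proof -
  have "inj_on (\<lambda>i. ancestor i v) {0..<Suc s}"
  proof (rule inj_onI)
    fix i j assume "i \<in> {0..<Suc s}" "j \<in> {0..<Suc s}" "ancestor i v = ancestor j v"
    moreover have "i \<le> depth v" "j \<le> depth v" using \<open>i \<in> _\<close> \<open>j \<in> _\<close> assms(2) by auto
    ultimately show "i = j" using ancestor[OF assms(1)] by (metis diff_diff_cancel)
  qed
  then show ?thesis by (simp add: distinct_map del: upt_Suc)
qed

lemma set_ancestor_path:
  assumes "v < N" "s \<le> depth v" "x \<in> set (map (\<lambda>i. ancestor i v) [0..<Suc s])"
  shows "\<exists>i\<le>s. x = ancestor i v \<and> depth x = depth v - i"
proof -
  obtain i where "i \<le> s" "x = ancestor i v"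
    using assms(3) by (auto simp del: upt_Suc simp: less_Suc_eq_le)
  then show ?thesis using ancestor[OF assms(1), of i] assms(2) by auto
qed

lemma first_common_ancestor:
  assumes y: "y1 < N" "y2 < N" "depth y1 = depth y2" "y1 \<noteq> y2"
  obtains t where "0 < t" "t \<le> depth y1" "ancestor t y1 = ancestor t y2"
    "\<And>s. s < t \<Longrightarrow> ancestor s y1 \<noteq> ancestor s y2"
proof -
  define t where "t = (LEAST t. ancestor t y1 = ancestor t y2)"
  have meet: "ancestor (depth y1) y1 = ancestor (depth y1) y2"
    using ancestor_depth[OF y(1)] ancestor_depth[OF y(2)] y(3) by simp
  have "t \<le> depth y1" unfolding t_def using meet by (rule Least_le)
  moreover have t_meet: "ancestor t y1 = ancestor t y2" unfolding t_def using meet by (rule LeastI)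
  moreover have "0 < t" using t_meet y(4) by (cases t) auto
  moreover have "s < t \<Longrightarrow> ancestor s y1 \<noteq> ancestor s y2" for s
    unfolding t_def using not_less_Least by blast
  ultimately show thesis using that by blast
qed

text \<open>Two distinct vertices of equal depth joined by a detour through deeper vertices
  close a cycle with their paths up to the first common ancestor.\<close>

lemma no_detour_at_equal_depth:
  assumes walk: "is_walk N E (y1 # C @ [y2])" and distinct_C: "distinct C"
    and same_depth: "depth y1 = depth y2" and ne: "y1 \<noteq> y2"
    and deeper: "\<And>c. c \<in> set C \<Longrightarrow> depth y1 < depth c"
  shows False
proof -
  have y: "y1 < N" "y2 < N" using walk by (auto simp: is_walk_def)
  obtain t where t: "0 < t" "t \<le> depth y1" "ancestor t y1 = ancestor t y2"
    and before_t: "\<And>s. s < t \<Longrightarrow> ancestor s y1 \<noteq> ancestor s y2"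
    using first_common_ancestor[OF y same_depth ne] by blast
  define A where "A = map (\<lambda>i. ancestor i y1) [0..<Suc t]"
  define B where "B = map (\<lambda>i. ancestor i y2) [0..<Suc (t - 1)]"
  define p where "p = rev A @ C @ B"
  have t': "t - 1 \<le> depth y2" using t same_depth by simp
  have A_walk: "is_walk N E A" and A_distinct: "distinct A"
    and A_set: "\<And>x. x \<in> set A \<Longrightarrow> \<exists>i\<le>t. x = ancestor i y1 \<and> depth x = depth y1 - i"
    unfolding A_def
    by (rule is_walk_ancestor_path[OF y(1) t(2)] distinct_ancestor_path[OF y(1) t(2)]
        set_ancestor_path[OF y(1) t(2)])+
  have B_walk: "is_walk N E B" and B_distinct: "distinct B"
    and B_set: "\<And>x. x \<in> set B \<Longrightarrow> \<exists>i\<le>t - 1. x = ancestor i y2 \<and> depth x = depth y2 - i"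
    unfolding B_def
    by (rule is_walk_ancestor_path[OF y(2) t'] distinct_ancestor_path[OF y(2) t']
        set_ancestor_path[OF y(2) t'])+
  obtain A' B' where A_split: "A = y1 # A'" and B_split: "B = y2 # B'"
    unfolding A_def B_def by (simp del: upt_Suc add: upt_conv_Cons)
  have "is_walk N E (rev A' @ y1 # C @ [y2])"
    using is_walk_join[of N E "rev A'" y1] A_walk walk is_walk_rev[of A] A_split by simp
  then have "is_walk N E ((rev A' @ y1 # C) @ y2 # B')"
    using is_walk_join[of N E "rev A' @ y1 # C" y2] B_walk B_split by simp
  then have "is_walk N E p" unfolding p_def A_split B_split by simp
  moreover have "E (last p) (hd p)"
  proof -
    have "last p = ancestor (t - 1) y2" "hd p = ancestor t y2"
      unfolding p_def A_def B_def using t(3) by (simp_all add: hd_append last_rev)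
    then show ?thesis using ancestor_edge[of y2 "t - 1"] edge_sym y t same_depth by auto
  qed
  moreover have "distinct p"
  proof -
    have "x \<notin> set B" if xA: "x \<in> set A" for x
    proof
      assume "x \<in> set B"
      obtain i where i: "i \<le> t" "x = ancestor i y1" "depth x = depth y1 - i"
        using A_set[OF xA] by blast
      obtain j where j: "j \<le> t - 1" "x = ancestor j y2" "depth x = depth y2 - j"
        using B_set[OF \<open>x \<in> set B\<close>] by blast
      have "i = j" using i j t(2) same_depth by linarith
      then have "i < t" using j(1) t(1) by linarith
      then have "ancestor i y1 \<noteq> ancestor i y2" by (rule before_t)
      then show False using i(2) j(2) \<open>i = j\<close> by simp
    qed
    moreover have "set C \<inter> (set A \<union> set B) = {}"
      using A_set B_set deeper same_depth by fastforce
    ultimately show ?thesis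
      unfolding p_def using A_distinct B_distinct distinct_C by auto
  qed
  moreover have "3 \<le> length p" unfolding p_def A_def B_def using t(1) by simp
  ultimately have "is_cycle N E p" by (simp add: is_cycle_def)
  with no_cycle show False by blast
qed

lemma depth_adjacent_neq: "E u v \<Longrightarrow> depth u \<noteq> depth v"
  using no_detour_at_equal_depth[of u "[]" v] edge_irrefl edge_bounded
  by (auto simp: is_walk_iff_successively)

lemma parent_unique:
  assumes "E w v" "depth w + 1 = depth v" "v < N" "v \<noteq> r"
  shows "w = parent v"
  using no_detour_at_equal_depth[of w "[v]" "parent v"] assms parent[of v] edge_bounded edge_sym
  by (auto simp: is_walk_iff_successively)

lemma edge_iff_parent:
  assumes "u < N" "v < N"
  shows "E u v \<longleftrightarrow> (v \<noteq> r \<and> u = parent v) \<or> (u \<noteq> r \<and> v = parent u)"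
proof
  assume e: "E u v"
  have "depth v = depth u + 1 \<or> depth u = depth v + 1"
    using depth_edge[OF e] depth_edge[OF edge_sym[OF e]] depth_adjacent_neq[OF e] by linarith
  then show "(v \<noteq> r \<and> u = parent v) \<or> (u \<noteq> r \<and> v = parent u)"
  proof
    assume "depth v = depth u + 1"
    moreover from this have "v \<noteq> r" by auto
    ultimately show ?thesis using parent_unique[OF e] assms by auto
  next
    assume "depth u = depth v + 1"
    moreover from this have "u \<noteq> r" by auto
    ultimately show ?thesis using parent_unique[OF edge_sym[OF e]] assms by auto
  qed
qed (use parent assms edge_sym in blast)

end

lemma permutes_rank_increasing_eq_id:
  fixes h :: "'a \<Rightarrow> 'b::ordered_cancel_comm_monoid_add"
  assumes p: "p permutes S" and S: "finite S"
    and increasing: "\<And>i. i \<in> S \<Longrightarrow> p i \<noteq> i \<Longrightarrow> h i < h (p i)"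
  shows "p = id"
proof (rule ccontr)
  assume "p \<noteq> id"
  then obtain i where i: "p i \<noteq> i" by (auto simp: fun_eq_iff)
  then have "i \<in> S" using permutes_not_in[OF p] by blast
  have le: "\<forall>i\<in>S. h i \<le> h (p i)" using increasing by (metis order.order_iff_strict)
  have "(\<Sum>i\<in>S. h i) < (\<Sum>i\<in>S. h (p i))"
    using S \<open>i \<in> S\<close> i le increasing by (intro sum_strict_mono_ex1) auto
  moreover have "(\<Sum>i\<in>S. h (p i)) = (\<Sum>i\<in>S. h i)"
    using sum.permute[OF p, of h] by (simp add: comp_def)
  ultimately show False by simp
qed

lemma det_rank_triangular:
  fixes A :: "'a::comm_ring_1 mat" and h :: "nat \<Rightarrow> nat"
  assumes A: "A \<in> carrier_mat n n"
    and ranked: "\<And>i j. i < n \<Longrightarrow> j < n \<Longrightarrow> i \<noteq> j \<Longrightarrow> A $$ (i, j) \<noteq> 0 \<Longrightarrow> h i < h j"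
  shows "det A = (\<Prod>i=0..<n. A $$ (i, i))"
proof -
  let ?P = "{p. p permutes {0..<n}}"
  let ?term = "\<lambda>p. signof p * (\<Prod>i=0..<n. A $$ (i, p i))"
  have vanish: "(\<Prod>i=0..<n. A $$ (i, p i)) = 0" if p: "p permutes {0..<n}" "p \<noteq> id" for p
  proof (rule ccontr)
    assume "(\<Prod>i=0..<n. A $$ (i, p i)) \<noteq> 0"
    then have "A $$ (i, p i) \<noteq> 0" if "i < n" for i
      using that prod_zero[of "{0..<n}" "\<lambda>i. A $$ (i, p i)"] atLeastLessThan_iff by blast
    then have "p = id"
      using permutes_in_image[OF p(1)] ranked
      by (intro permutes_rank_increasing_eq_id[OF p(1), of h]) auto
    with p(2) show False by simp
  qed
  have "det A = sum ?term ?P" by (rule det_def'[OF A])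
  also have "\<dots> = ?term id + sum ?term (?P - {id})"
    by (rule sum.remove) (simp_all add: finite_permutations permutes_id)
  also have "sum ?term (?P - {id}) = 0" by (rule sum.neutral) (auto simp: vanish)
  finally show ?thesis by simp
qed

definition forest_unit_mat ::
    "nat \<Rightarrow> (nat \<Rightarrow> bool) \<Rightarrow> (nat \<Rightarrow> nat) \<Rightarrow> (nat \<Rightarrow> 'a::comm_ring_1) \<Rightarrow> 'a mat" where
  "forest_unit_mat N nonroot par x =
     mat N N (\<lambda>(a, b). if a = b then 1 else if nonroot b \<and> par b = a then x b else 0)"

lemma forest_LDLt:
  fixes M :: "'a::comm_ring_1 mat" and s x :: "nat \<Rightarrow> 'a"
    and N :: nat and nonroot :: "nat \<Rightarrow> bool" and par :: "nat \<Rightarrow> nat"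
  defines "L \<equiv> forest_unit_mat N nonroot par x"
  assumes M: "M \<in> carrier_mat N N"
    and no_loop: "\<And>v. v < N \<Longrightarrow> nonroot v \<Longrightarrow> par v \<noteq> v"
    and diag: "\<And>a. a < N \<Longrightarrow>
      M $$ (a, a) = s a + (\<Sum>c\<in>{c. c < N \<and> nonroot c \<and> par c = a}. x c ^ 2 * s c)"
    and off: "\<And>a b. a < N \<Longrightarrow> b < N \<Longrightarrow> a \<noteq> b \<Longrightarrow> M $$ (a, b) =
      (if nonroot a \<and> par a = b then s a * x a else 0) +
      (if nonroot b \<and> par b = a then s b * x b else 0)"
  shows "M = L * mat N N (\<lambda>(a, b). if a = b then s a else 0) * transpose_mat L"
proof (rule eq_matI)
  define D where "D = mat N N (\<lambda>(a, b). if a = b then s a else (0::'a))"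
  define ch where "ch a = {c. c < N \<and> nonroot c \<and> par c = a}" for a
  define g where "g a b c = L $$ (a, c) * s c * L $$ (b, c)" for a b c
  have L: "L \<in> carrier_mat N N" by (simp add: L_def forest_unit_mat_def)
  have L_entry: "L $$ (a, b) = (if a = b then 1 else if nonroot b \<and> par b = a then x b else 0)"
    if "a < N" "b < N" for a b using that by (simp add: L_def forest_unit_mat_def)
  have LD: "L * D = mat N N (\<lambda>(a, c). L $$ (a, c) * s c)"
  proof (rule eq_matI)
    fix a c assume "a < dim_row (mat N N (\<lambda>(a, c). L $$ (a, c) * s c))"
      "c < dim_col (mat N N (\<lambda>(a, c). L $$ (a, c) * s c))"
    then have ac: "a < N" "c < N" by auto
    have "(L * D) $$ (a, c) = (\<Sum>i\<in>{0..<N}. L $$ (a, i) * D $$ (i, c))"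
      using ac L by (simp add: D_def scalar_prod_def)
    also have "\<dots> = (\<Sum>i\<in>{0..<N}. if i = c then L $$ (a, i) * s i else 0)"
      using ac by (intro sum.cong) (auto simp: D_def)
    finally show "(L * D) $$ (a, c) = mat N N (\<lambda>(a, c). L $$ (a, c) * s c) $$ (a, c)"
      using ac by simp
  qed (use L in \<open>auto simp: D_def\<close>)
  fix a b assume "a < dim_row (L * D * transpose_mat L)" "b < dim_col (L * D * transpose_mat L)"
  then have a: "a < N" and b: "b < N" using L by auto
  have product: "(L * D * transpose_mat L) $$ (a, b) = (\<Sum>c\<in>{0..<N}. g a b c)"
    using a b L unfolding LD g_def by (simp add: scalar_prod_def)
  have a_ch: "a \<notin> ch a" using no_loop a by (auto simp: ch_def)
  have L_vanish: "L $$ (a', c) = 0" if "a' < N" "c < N" "c \<noteq> a'" "c \<notin> ch a'" for a' c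
    using that by (auto simp: L_entry ch_def)
  show "M $$ (a, b) = (L * D * transpose_mat L) $$ (a, b)"
  proof (cases "a = b")
    case True
    have "(\<Sum>c\<in>{0..<N}. g a b c) = (\<Sum>c\<in>insert a (ch a). g a b c)"
      using a L_vanish True by (intro sum.mono_neutral_right) (auto simp: g_def ch_def)
    also have "\<dots> = g a a a + (\<Sum>c\<in>ch a. g a a c)"
      using a_ch True by (simp add: ch_def)
    also have "(\<Sum>c\<in>ch a. g a a c) = (\<Sum>c\<in>ch a. x c ^ 2 * s c)"
      using a_ch a by (intro sum.cong) (auto simp: g_def L_entry ch_def power2_eq_square)
    finally show ?thesis using True product diag[OF a] a by (simp add: ch_def g_def L_entry)
  next
    case False
    have "(\<Sum>c\<in>{0..<N}. g a b c) = (\<Sum>c\<in>{a, b}. g a b c)"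
    proof (intro sum.mono_neutral_right ballI)
      fix c assume c: "c \<in> {0..<N} - {a, b}"
      have "c \<notin> ch a \<or> c \<notin> ch b" using False by (auto simp: ch_def)
      then show "g a b c = 0" using L_vanish[of a c] L_vanish[of b c] c a b by (auto simp: g_def)
    qed (use a b in auto)
    then show ?thesis using False product off[OF a b False] a b by (simp add: g_def L_entry)
  qed
qed (use M in \<open>auto simp: L_def forest_unit_mat_def\<close>)

lemma det_forest_LDLt:
  fixes M :: "'a::comm_ring_1 mat" and s x :: "nat \<Rightarrow> 'a" and h :: "nat \<Rightarrow> nat"
    and N :: nat and nonroot :: "nat \<Rightarrow> bool" and par :: "nat \<Rightarrow> nat"
  assumes M: "M \<in> carrier_mat N N"
    and rank: "\<And>v. v < N \<Longrightarrow> nonroot v \<Longrightarrow> h (par v) < h v"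
    and diag: "\<And>a. a < N \<Longrightarrow>
      M $$ (a, a) = s a + (\<Sum>c\<in>{c. c < N \<and> nonroot c \<and> par c = a}. x c ^ 2 * s c)"
    and off: "\<And>a b. a < N \<Longrightarrow> b < N \<Longrightarrow> a \<noteq> b \<Longrightarrow> M $$ (a, b) =
      (if nonroot a \<and> par a = b then s a * x a else 0) +
      (if nonroot b \<and> par b = a then s b * x b else 0)"
  shows "det M = (\<Prod>a=0..<N. s a)"
proof -
  define L where "L = forest_unit_mat N nonroot par x"
  define D where "D = mat N N (\<lambda>(a, b). if a = b then s a else (0::'a))"
  have L: "L \<in> carrier_mat N N" and D: "D \<in> carrier_mat N N"
    by (simp_all add: L_def D_def forest_unit_mat_def)
  have factor: "M = L * D * transpose_mat L"
    unfolding L_def D_def using M rank diag off by (intro forest_LDLt) fastforce+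
  have "det L = (\<Prod>i=0..<N. L $$ (i, i))"
    by (rule det_rank_triangular[OF L, of h])
      (use rank in \<open>auto simp: L_def forest_unit_mat_def split: if_splits\<close>)
  then have det_L: "det L = 1" by (simp add: L_def forest_unit_mat_def)
  have det_D: "det D = (\<Prod>a=0..<N. s a)"
    using det_rank_triangular[OF D, of "\<lambda>_. 0"] by (simp add: D_def)
  have "transpose_mat L \<in> carrier_mat N N" using L by simp
  then have "det M = det L * det D * det L"
    unfolding factor using det_mult[OF mult_carrier_mat[OF L D]] det_mult[OF L D] det_transpose[OF L]
    by simp
  then show ?thesis using det_L det_D by simp
qed

lemma prod_ratio_powers_telescope:
  fixes P :: "nat \<Rightarrow> 'a::field" and n :: "nat \<Rightarrow> nat"
  assumes P0: "P 0 = 1" and nonzero: "\<And>j. 1 \<le> j \<Longrightarrow> j \<le> K \<Longrightarrow> P j \<noteq> 0"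
    and antimono: "\<And>j. 1 \<le> j \<Longrightarrow> j \<le> K \<Longrightarrow> n (j + 1) \<le> n j"
  shows "(\<Prod>j=1..Suc K. (P j / P (j - 1)) ^ n j) =
    P (Suc K) ^ n (Suc K) * (\<Prod>j=1..K. P j ^ (n j - n (j + 1)))"
  using nonzero antimono
proof (induction K)
  case 0
  then show ?case using P0 by simp
next
  case (Suc K)
  have IH: "(\<Prod>j=1..Suc K. (P j / P (j - 1)) ^ n j) =
      P (Suc K) ^ n (Suc K) * (\<Prod>j=1..K. P j ^ (n j - n (j + 1)))"
    using Suc by auto
  have split_power: "P (Suc K) ^ (n (Suc K) - n (Suc (Suc K))) =
      P (Suc K) ^ n (Suc K) / P (Suc K) ^ n (Suc (Suc K))"
    using Suc.prems by (intro power_diff) auto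
  have "(\<Prod>j=1..Suc (Suc K). (P j / P (j - 1)) ^ n j) =
      (\<Prod>j=1..Suc K. (P j / P (j - 1)) ^ n j) * (P (Suc (Suc K)) / P (Suc K)) ^ n (Suc (Suc K))"
    by (simp add: prod.cl_ivl_Suc)
  also have "\<dots> = P (Suc K) ^ n (Suc K) * (\<Prod>j=1..K. P j ^ (n j - n (j + 1))) *
      (P (Suc (Suc K)) ^ n (Suc (Suc K)) / P (Suc K) ^ n (Suc (Suc K)))"
    by (subst IH, subst power_divide, rule refl)
  also have "\<dots> = P (Suc (Suc K)) ^ n (Suc (Suc K)) *
      ((\<Prod>j=1..K. P j ^ (n j - n (j + 1))) * P (Suc K) ^ (n (Suc K) - n (Suc (Suc K))))"
    unfolding split_power by (simp add: field_simps)
  finally show ?case by (simp add: prod.cl_ivl_Suc)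
qed

lemma Pb_monic: "degree (Pb \<alpha> d m j) = j \<and> coeff (Pb \<alpha> d m j) j = 1"
proof (induction \<alpha> d m j rule: Pb.induct)
  case (3 \<alpha> d m j)
  let ?a = "[:- (\<alpha> * d (Suc (Suc j))), 1:] :: real poly"
  let ?p = "Pb \<alpha> d m (Suc j)"
  let ?q = "Polynomial.smult ((1 - \<alpha>)^2 * m (Suc j)) (Pb \<alpha> d m j)"
  have p: "degree ?p = Suc j" "coeff ?p (Suc j) = 1" and q: "degree ?q \<le> j"
    using 3 by (auto simp: degree_smult_le)
  have a: "degree ?a = 1" "coeff ?a 1 = 1" "?a \<noteq> 0" by auto
  have "?p \<noteq> 0" using p by auto
  have ap: "degree (?a * ?p) = Suc (Suc j)" "coeff (?a * ?p) (Suc (Suc j)) = 1"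
    using degree_mult_eq[OF a(3) \<open>?p \<noteq> 0\<close>] coeff_mult_degree_sum[of ?a ?p] a p by simp_all
  have "coeff ?q (Suc (Suc j)) = 0" using q by (intro coeff_eq_0) simp
  then have c: "coeff (?a * ?p - ?q) (Suc (Suc j)) = 1" using ap(2) by simp
  have "degree (?a * ?p - ?q) \<le> Suc (Suc j)"
    using degree_diff_le_max[of "?a * ?p" ?q] ap q by simp
  moreover have "Suc (Suc j) \<le> degree (?a * ?p - ?q)" using c by (intro le_degree) simp
  ultimately show ?case using c by simp
qed simp_all

lemma Pb_nonzero: "Pb \<alpha> d m j \<noteq> 0"
  using Pb_monic[of \<alpha> d m j] by auto

lemma poly_Pb_ratio:
  assumes "poly (Pb \<alpha> d m (Suc j)) z \<noteq> 0"
  shows "z - \<alpha> * d (Suc (Suc j)) =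
    poly (Pb \<alpha> d m (Suc (Suc j))) z / poly (Pb \<alpha> d m (Suc j)) z +
    m (Suc j) * ((1 - \<alpha>)^2 / (poly (Pb \<alpha> d m (Suc j)) z / poly (Pb \<alpha> d m j) z))"
  using assms by (cases "poly (Pb \<alpha> d m j) z = 0") (simp_all add: field_simps)

lemma poly_eq_if_eq_off_roots:
  fixes p q Q :: "'a::{ring_char_0, idom} poly"
  assumes "Q \<noteq> 0" and "\<And>x. poly Q x \<noteq> 0 \<Longrightarrow> poly p x = poly q x"
  shows "p = q"
proof -
  have "poly (Q * (p - q)) x = 0" for x using assms(2)[of x] by auto
  then have "Q * (p - q) = 0" using poly_all_0_iff_0 by blast
  with assms(1) show ?thesis by simp
qed

text \<open>Layer j consists of the vertices at depth k - j, so that, as in the paper, layer 1 is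
  the deepest one and layer k is the root.\<close>

locale bethe_tree = rooted_tree +
  fixes k :: nat and n d :: "nat \<Rightarrow> nat"
  assumes k_ge_2: "k \<ge> 2"
    and depth_less: "\<And>v. v < N \<Longrightarrow> depth v < k"
    and deepest: "\<exists>v<N. depth v = k - 1"
    and layer_card: "\<And>j. 1 \<le> j \<Longrightarrow> j \<le> k \<Longrightarrow> n j = card {v. v < N \<and> depth v = k - j}"
    and degree_layer: "\<And>v. v < N \<Longrightarrow> gdegree N E v = d (k - depth v)"
begin

definition children :: "nat \<Rightarrow> nat set" where
  "children v = {u. u < N \<and> u \<noteq> r \<and> parent u = v}"

definition layer :: "nat \<Rightarrow> nat set" where
  "layer j = {v. v < N \<and> depth v = k - j}"

definition branching :: "nat \<Rightarrow> nat" where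
  "branching j = d j - (if j = k then 0 else 1)"

lemma finite_layer [simp]: "finite (layer j)"
  by (simp add: layer_def)

lemma children_depth: "u \<in> children v \<Longrightarrow> u < N \<and> depth u = depth v + 1"
  unfolding children_def using parent by auto

lemma gdegree_children:
  assumes v: "v < N"
  shows "gdegree N E v = card (children v) + (if v = r then 0 else 1)"
proof -
  have neighbours: "{u. u < N \<and> E v u} = children v \<union> (if v = r then {} else {parent v})"
    using edge_iff_parent[OF v] parent[OF v] unfolding children_def by auto
  have "v \<noteq> r \<Longrightarrow> parent v \<notin> children v"
    using children_depth parent(2)[OF v] by fastforce
  then show ?thesis unfolding gdegree_def neighbours by (simp add: children_def)
qed

lemma n_layer: "1 \<le> j \<Longrightarrow> j \<le> k \<Longrightarrow> n j = card (layer j)"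
  using layer_card by (simp add: layer_def)

lemma n_top: "n k = 1"
proof -
  have "layer k = {r}" unfolding layer_def using depth_eq_0_iff root by auto
  then show ?thesis using n_layer[of k] k_ge_2 by simp
qed

lemma n_pos:
  assumes "1 \<le> j" "j \<le> k"
  shows "n j > 0"
proof -
  obtain v where v: "v < N" "depth v = k - 1" using deepest by blast
  then have "ancestor (j - 1) v \<in> layer j"
    using ancestor[OF v(1), of "j - 1"] assms unfolding layer_def by auto
  then show ?thesis using n_layer[OF assms] by (auto simp: layer_def card_gt_0_iff)
qed

lemma children_layer_1: "v \<in> layer 1 \<Longrightarrow> children v = {}"
  using children_depth depth_less unfolding layer_def by fastforce

lemma d_1: "d 1 = 1"
proof -
  obtain v where v: "v < N" "depth v = k - 1" using deepest by blast
  then have "v \<noteq> r" using k_ge_2 by auto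
  with v show ?thesis
    using gdegree_children[OF v(1)] degree_layer[OF v(1)] children_layer_1 k_ge_2
    by (simp add: layer_def)
qed

lemma card_children:
  assumes "2 \<le> j" "j \<le> k" "v \<in> layer j"
  shows "card (children v) = branching j"
proof -
  have v: "v < N" "depth v = k - j" using assms(3) unfolding layer_def by auto
  then have "v = r \<longleftrightarrow> j = k" using depth_eq_0_iff assms by auto
  then show ?thesis
    using gdegree_children[OF v(1)] degree_layer[OF v(1)] v assms by (simp add: branching_def)
qed

lemma n_recurrence:
  assumes j: "2 \<le> j" "j \<le> k"
  shows "n (j - 1) = branching j * n j"
proof -
  have fibre: "{u \<in> layer (j - 1). parent u = v} = children v" if "v \<in> layer j" for v
    using that children_depth parent j depth_eq_0_iff
    unfolding children_def layer_def by fastforce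
  have "parent ` layer (j - 1) \<subseteq> layer j"
    using parent j depth_eq_0_iff unfolding layer_def by fastforce
  then have "(\<Sum>u\<in>layer (j - 1). 1) = (\<Sum>v\<in>layer j. \<Sum>u\<in>{u \<in> layer (j - 1). parent u = v}. 1)"
    by (intro sum.group[symmetric]) auto
  also have "\<dots> = (\<Sum>v\<in>layer j. branching j)"
    using fibre card_children[OF j] by (intro sum.cong) auto
  finally show ?thesis using n_layer[of j] n_layer[of "j - 1"] j by simp
qed

lemma n_antimono: "1 \<le> j \<Longrightarrow> j < k \<Longrightarrow> n (j + 1) \<le> n j"
  using n_recurrence[of "j + 1"] n_pos[of j] by (cases "branching (j + 1)") auto

lemma card_children_ratio:
  assumes "2 \<le> j" "j \<le> k" "v \<in> layer j"
  shows "real (card (children v)) = real (n (j - 1)) / real (n j)"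
  using card_children[OF assms] n_recurrence[OF assms(1,2)] n_pos[of j] assms(1,2) by simp

lemma prod_layers:
  fixes f :: "nat \<Rightarrow> 'a::comm_monoid_mult"
  shows "(\<Prod>a=0..<N. f (k - depth a)) = (\<Prod>j\<in>{1..k}. f j ^ n j)"
proof -
  have "(\<Prod>a=0..<N. f (k - depth a)) =
      (\<Prod>j\<in>{1..k}. \<Prod>a\<in>{a \<in> {0..<N}. k - depth a = j}. f (k - depth a))"
    by (rule prod.group[symmetric]) (use depth_less in \<open>auto simp: Suc_le_eq\<close>)
  also have "\<dots> = (\<Prod>j\<in>{1..k}. f j ^ n j)"
  proof (rule prod.cong[OF refl])
    fix j assume j: "j \<in> {1..k}"
    then have "{a \<in> {0..<N}. k - depth a = j} = layer j"
      unfolding layer_def using depth_less by auto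
    then show "(\<Prod>a\<in>{a \<in> {0..<N}. k - depth a = j}. f (k - depth a)) = f j ^ n j"
      using n_layer j by (simp add: layer_def)
  qed
  finally show ?thesis .
qed

lemma pivot_identity:
  fixes \<alpha> z :: real
  defines "P j \<equiv> poly (Pb \<alpha> (\<lambda>j. real (d j)) (\<lambda>j. real (n j) / real (n (j + 1))) j) z"
  assumes a: "a \<in> layer (Suc i)" and i: "Suc i \<le> k" and nonzero: "P i \<noteq> 0"
  shows "z - \<alpha> * d (Suc i) =
    P (Suc i) / P i + real (card (children a)) * ((1 - \<alpha>)^2 / (P i / P (i - 1)))"
proof (cases i)
  case 0
  then show ?thesis using children_layer_1 a d_1 by (simp add: P_def)
next
  case (Suc i')
  then show ?thesis
    using poly_Pb_ratio[of \<alpha> "\<lambda>j. real (d j)" "\<lambda>j. real (n j) / real (n (j + 1))" i' z]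
      card_children_ratio[of "Suc i" a] nonzero a i
    unfolding P_def by simp
qed

lemma poly_char_poly_A_alpha:
  fixes \<alpha> z :: real
  defines "P j \<equiv> poly (Pb \<alpha> (\<lambda>j. real (d j)) (\<lambda>j. real (n j) / real (n (j + 1))) j) z"
  assumes nonzero: "\<And>j. 1 \<le> j \<Longrightarrow> j < k \<Longrightarrow> P j \<noteq> 0"
  shows "poly (char_poly (A_alpha \<alpha> N E)) z = P k * (\<Prod>j\<in>{1..k-1}. P j ^ (n j - n (j + 1)))"
proof -
  define \<beta> where "\<beta> = 1 - \<alpha>"
  define S where "S j = P j / P (j - 1)" for j
  define s where "s v = S (k - depth v)" for v
  define x where "x v = - \<beta> / s v" for v
  define M where "M = - char_matrix (A_alpha \<alpha> N E) z"
  have A: "A_alpha \<alpha> N E \<in> carrier_mat N N"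
    by (simp add: A_alpha_def deg_matrix_def adj_matrix_def)
  have M: "M \<in> carrier_mat N N" using A by (simp add: M_def)
  have M_entry: "M $$ (a, b) =
      (if a = b then z - \<alpha> * d (k - depth a) else 0) - (if E a b then \<beta> else 0)"
    if "a < N" "b < N" for a b
    using that degree_layer edge_irrefl
    by (simp add: M_def char_matrix_def A_alpha_def deg_matrix_def adj_matrix_def \<beta>_def)
  have P_0: "P 0 = 1" by (simp add: P_def)
  have P_nonzero: "j < k \<Longrightarrow> P j \<noteq> 0" for j using nonzero P_0 by (cases j) auto
  have s_nonzero: "s v \<noteq> 0" if "v < N" "v \<noteq> r" for v
  proof -
    have "0 < depth v" "depth v < k" using that depth_eq_0_iff depth_less by auto
    then show ?thesis using P_nonzero by (simp add: s_def S_def)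
  qed
  have diag: "M $$ (a, a) = s a + (\<Sum>c\<in>{c. c < N \<and> c \<noteq> r \<and> parent c = a}. x c ^ 2 * s c)"
    if a: "a < N" for a
  proof -
    define j where "j = k - depth a"
    have j: "a \<in> layer j" "1 \<le> j" "j \<le> k"
      using depth_less[OF a] a by (auto simp: j_def layer_def)
    have "x c ^ 2 * s c = \<beta>^2 / S (j - 1)" if "c \<in> children a" for c
      using children_depth[OF that] s_nonzero[of c] depth_less[of c] that
      by (simp add: x_def s_def j_def power2_eq_square children_def)
    then have "(\<Sum>c\<in>children a. x c ^ 2 * s c) = real (card (children a)) * (\<beta>^2 / S (j - 1))"
      by simp
    moreover have "z - \<alpha> * d j = S j + real (card (children a)) * (\<beta>^2 / S (j - 1))"
    proof -
      obtain i where i: "j = Suc i" using j(2) by (cases j) auto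
      have "P i \<noteq> 0" using P_nonzero i j(3) by simp
      then show ?thesis
        using pivot_identity[of a i \<alpha> z] i j unfolding S_def P_def \<beta>_def by simp
    qed
    ultimately show ?thesis
      using M_entry[OF a a] edge_irrefl by (simp add: s_def j_def children_def)
  qed
  have off: "M $$ (a, b) = (if a \<noteq> r \<and> parent a = b then s a * x a else 0) +
      (if b \<noteq> r \<and> parent b = a then s b * x b else 0)"
    if ab: "a < N" "b < N" "a \<noteq> b" for a b
  proof -
    have "\<not> ((a \<noteq> r \<and> parent a = b) \<and> (b \<noteq> r \<and> parent b = a))"
      using parent(2)[OF ab(1)] parent(2)[OF ab(2)] by auto
    then show ?thesis
      using M_entry[OF ab(1,2)] edge_iff_parent[OF ab(1,2)] s_nonzero ab by (auto simp: x_def)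
  qed
  have "det M = (\<Prod>a=0..<N. s a)"
    by (rule det_forest_LDLt[OF M _ diag off, of depth]) (use parent in fastforce)
  also have "\<dots> = (\<Prod>j\<in>{1..k}. S j ^ n j)"
    unfolding s_def by (rule prod_layers)
  also have "\<dots> = (\<Prod>j=1..Suc (k - 1). (P j / P (j - 1)) ^ n j)"
    using k_ge_2 by (simp add: S_def)
  also have "\<dots> = P k ^ n k * (\<Prod>j=1..k - 1. P j ^ (n j - n (j + 1)))"
    using prod_ratio_powers_telescope[of P "k - 1" n] P_0 P_nonzero n_antimono k_ge_2 by simp
  finally show ?thesis
    using char_poly_matrix[OF A] n_top by (simp add: M_def)
qed

end

lemma bethe_tree_if_gen_bethe_tree:
  assumes bethe: "gen_bethe_tree N E r k" and k: "k \<ge> 2"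
    and n_def: "\<And>j. j \<in> {1..k} \<Longrightarrow> n j = card {v. v < N \<and> level N E r v = k - j + 1}"
    and d_def: "\<And>j v. j \<in> {1..k} \<Longrightarrow> v < N \<Longrightarrow> level N E r v = k - j + 1 \<Longrightarrow>
                  gdegree N E v = d j"
  shows "bethe_tree N E r k n d"
proof -
  have tree: "is_tree N E" "r < N"
    and levels: "\<forall>v<N. level N E r v \<le> k" "\<exists>v<N. level N E r v = k"
    using bethe unfolding gen_bethe_tree_def by auto
  interpret rooted_tree N E r using tree by unfold_locales
  have level: "level N E r v = depth v + 1" for v by (simp add: level_def depth_def)
  show ?thesis
  proof unfold_locales
    show "depth v < k" if "v < N" for v using levels(1) that level[of v] by fastforce
    then show "gdegree N E v = d (k - depth v)" if "v < N" for v
      using d_def[of "k - depth v" v] that level[of v] by fastforce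
    show "\<exists>v<N. depth v = k - 1" using levels(2) level by fastforce
    show "n j = card {v. v < N \<and> depth v = k - j}" if "1 \<le> j" "j \<le> k" for j
      using n_def[of j] that level by (simp add: Suc_diff_le)
  qed (rule k)
qed

theorem theorem4:
  fixes N k r :: nat and E :: "nat \<Rightarrow> nat \<Rightarrow> bool" and \<alpha> :: real
    and n d :: "nat \<Rightarrow> nat"
  assumes bethe: "gen_bethe_tree N E r k"
    and k2: "k \<ge> 2"
    and alpha: "0 \<le> \<alpha>" "\<alpha> \<le> 1"
    and n_def: "\<And>j. j \<in> {1..k} \<Longrightarrow> n j = card {v. v < N \<and> level N E r v = k - j + 1}"
    and d_def: "\<And>j v. j \<in> {1..k} \<Longrightarrow> v < N \<Longrightarrow> level N E r v = k - j + 1 \<Longrightarrow>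
                  gdegree N E v = d j"
  shows "char_poly (A_alpha \<alpha> N E) =
     Pb \<alpha> (\<lambda>j. real (d j)) (\<lambda>j. real (n j) / real (n (j + 1))) k *
     (\<Prod>j\<in>{1..k-1}. Pb \<alpha> (\<lambda>j. real (d j)) (\<lambda>j. real (n j) / real (n (j + 1))) j
                        ^ (n j - n (j + 1)))"
proof -
  interpret bethe_tree N E r k n d
    using bethe_tree_if_gen_bethe_tree[OF bethe k2 n_def d_def] .
  let ?P = "Pb \<alpha> (\<lambda>j. real (d j)) (\<lambda>j. real (n j) / real (n (j + 1)))"
  show ?thesis
  proof (rule poly_eq_if_eq_off_roots)
    show "(\<Prod>j\<in>{1..k-1}. ?P j) \<noteq> 0" using Pb_nonzero by simp
    fix z assume "poly (\<Prod>j\<in>{1..k-1}. ?P j) z \<noteq> 0"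
    then have "poly (?P j) z \<noteq> 0" if "1 \<le> j" "j < k" for j
      using that by (simp add: poly_prod)
    then show "poly (char_poly (A_alpha \<alpha> N E)) z =
        poly (?P k * (\<Prod>j\<in>{1..k-1}. ?P j ^ (n j - n (j + 1)))) z"
      using poly_char_poly_A_alpha[of \<alpha> z] by (simp add: poly_prod)
  qed
qed

end
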